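(* Let $\mathbb K$ be a field with $2\in\mathbb K^\times$, $A$ a unital commutative associative $\mathbb K$-algebra, $\mathfrak k$ a $\mathbb K$-Lie algebra and $\mathfrak g=A\otimes\mathfrak k$. For $a,b,c\in A$ and $x,y,z\in\mathfrak k$, $$p_1(\partial(ax\wedge by\wedge cz))\equiv p_1(abc\,x\wedge[y,z])\equiv-p_2(\partial(ax\wedge by\wedge cz))\mod B_2(\mathfrak g).$$ In particular $(p_1+p_2)(B_2(\mathfrak g))\subseteq B_2(\mathfrak g)$.
   Context: $\mathfrak g$ has bracket $[a\otimes x,a'\otimes x']=aa'\otimes[x,x']$, $ax=a\otimes x$, unit $\mathbf 1$. $v\wedge w=\tfrac12(v\otimes w-w\otimes v)$, $v\vee w=\tfrac12(v\otimes w+w\otimes v)$. $\partial:\Lambda^3(\mathfrak g)\to\Lambda^2(\mathfrak g)$, $u\wedge v\wedge w\mapsto[u,v]\wedge w+[v,w]\wedge u+[w,u]\wedge v$, and $B_2(\mathfrak g)=\mathrm{im}\,\partial$. $I_A$ is the kernel of multiplication $S^2(A)\to A$. The subspaces $\Lambda^2(A)\otimes S^2(\mathfrak k)$, $A\otimes\Lambda^2(\mathfrak k)$, $I_A\otimes\Lambda^2(\mathfrak k)$ are regarded as subspaces of $\Lambda^2(\mathfrak g)$ via $a\wedge b\otimes x\vee y\mapsto\tfrac12(ax\wedge by+ay\wedge bx)$, $a\otimes x\wedge y\mapsto\tfrac12(ax\wedge\mathbf 1y-ay\wedge\mathbf 1x)$, $a\vee b\otimes x\wedge y\mapsto\tfrac12(ax\wedge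 by-ay\wedge bx)$; then $\Lambda^2(\mathfrak g)$ is their direct sum and $p_1,p_2,p_3$ are the corresponding projections, given by $p_1(ax\wedge by)=a\wedge b\otimes x\vee y$, $p_2(ax\wedge by)=ab\otimes x\wedge y$, $p_3(ax\wedge by)=(a\vee b-ab\vee\mathbf 1)\otimes x\wedge y$. *)

theory Defs
  imports Complex_Main "HOL-Library.Poly_Mapping"
begin

definition lie_algebra :: "('k::field \<Rightarrow> 'l::ab_group_add \<Rightarrow> 'l) \<Rightarrow> ('l \<Rightarrow> 'l \<Rightarrow> 'l) \<Rightarrow> bool" where
  "lie_algebra sL br \<longleftrightarrow> vector_space sL
     \<and> (\<forall>x y z. br (x + y) z = br x z + br y z)
     \<and> (\<forall>x y z. br x (y + z) = br x y + br x z)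
     \<and> (\<forall>c x y. br (sL c x) y = sL c (br x y))
     \<and> (\<forall>c x y. br x (sL c y) = sL c (br x y))
     \<and> (\<forall>x. br x x = 0)
     \<and> (\<forall>x y z. br x (br y z) + br y (br z x) + br z (br x y) = 0)"

definition comm_algebra :: "('k::field \<Rightarrow> 'a::comm_ring_1 \<Rightarrow> 'a) \<Rightarrow> bool" where
  "comm_algebra sA \<longleftrightarrow> vector_space sA \<and> (\<forall>c a b. sA c (a * b) = sA c a * b)"

definition fsc :: "'k::field \<Rightarrow> ('v \<Rightarrow>\<^sub>0 'k) \<Rightarrow> ('v \<Rightarrow>\<^sub>0 'k)" where
  "fsc c f = Poly_Mapping.map (\<lambda>r. c * r) f"

definition linext :: "('v \<Rightarrow> ('w \<Rightarrow>\<^sub>0 'k::field)) \<Rightarrow> ('v \<Rightarrow>\<^sub>0 'k) \<Rightarrow> ('w \<Rightarrow>\<^sub>0 'k)" where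
  "linext g f = (\<Sum>v\<in>Poly_Mapping.keys f. fsc (Poly_Mapping.lookup f v) (g v))"

(* Lambda^2(g), g = A (x) k, is modelled as the free vector space on 4-tuples
   ((a,x),(b,y)) -- the generator W a x b y representing (a x) \<wedge> (b y) --
   modulo the subspace N2 of multilinearity and antisymmetry relations. *)
definition W :: "'a \<Rightarrow> 'l \<Rightarrow> 'a \<Rightarrow> 'l \<Rightarrow> (('a \<times> 'l) \<times> ('a \<times> 'l)) \<Rightarrow>\<^sub>0 'k::field" where
  "W a x b y = Poly_Mapping.single ((a, x), (b, y)) 1"

definition rel2 :: "('k::field \<Rightarrow> 'a::comm_ring_1 \<Rightarrow> 'a) \<Rightarrow> ('k \<Rightarrow> 'l::ab_group_add \<Rightarrow> 'l)
    \<Rightarrow> ((('a \<times> 'l) \<times> ('a \<times> 'l)) \<Rightarrow>\<^sub>0 'k) set" where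
  "rel2 sA sL =
     {W (a + a') x b y - W a x b y - W a' x b y | a a' x b y. True}
   \<union> {W a (x + x') b y - W a x b y - W a x' b y | a x x' b y. True}
   \<union> {W a x (b + b') y - W a x b y - W a x b' y | a x b b' y. True}
   \<union> {W a x b (y + y') - W a x b y - W a x b y' | a x b y y'. True}
   \<union> {W (sA c a) x b y - fsc c (W a x b y) | c a x b y. True}
   \<union> {W a (sL c x) b y - fsc c (W a x b y) | c a x b y. True}
   \<union> {W a x (sA c b) y - fsc c (W a x b y) | c a x b y. True}
   \<union> {W a x b (sL c y) - fsc c (W a x b y) | c a x b y. True}
   \<union> {W a x b y + W b y a x | a x b y. True}"

(* representative of \<partial>(ax \<wedge> by \<wedge> cz) = [ax,by]\<wedge>cz + [by,cz]\<wedge>ax + [cz,ax]\<wedge>by *)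
definition bd3 :: "('l \<Rightarrow> 'l \<Rightarrow> 'l) \<Rightarrow> 'a::comm_ring_1 \<Rightarrow> 'l \<Rightarrow> 'a \<Rightarrow> 'l \<Rightarrow> 'a \<Rightarrow> 'l
    \<Rightarrow> (('a \<times> 'l) \<times> ('a \<times> 'l)) \<Rightarrow>\<^sub>0 'k::field" where
  "bd3 br a x b y c z = W (a * b) (br x y) c z + W (b * c) (br y z) a x + W (c * a) (br z x) b y"

(* preimage of B_2(g) = im \<partial> in the free space: relations plus boundaries
   (\<Lambda>^3(g) is spanned by the ax \<wedge> by \<wedge> cz) *)
definition B2 :: "('k::field \<Rightarrow> 'a::comm_ring_1 \<Rightarrow> 'a) \<Rightarrow> ('k \<Rightarrow> 'l::ab_group_add \<Rightarrow> 'l)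
    \<Rightarrow> ('l \<Rightarrow> 'l \<Rightarrow> 'l) \<Rightarrow> ((('a \<times> 'l) \<times> ('a \<times> 'l)) \<Rightarrow>\<^sub>0 'k) set" where
  "B2 sA sL br = Modules.module.span fsc (rel2 sA sL \<union> {bd3 br a x b y c z | a x b y c z. True})"

(* p1 followed by the embedding into \<Lambda>^2(g):
   ax \<wedge> by \<mapsto> a\<wedge>b \<otimes> x\<vee>y \<mapsto> 1/2 (ax \<wedge> by + ay \<wedge> bx) *)
definition P1 :: "((('a::comm_ring_1 \<times> 'l) \<times> ('a \<times> 'l)) \<Rightarrow>\<^sub>0 'k::field)
    \<Rightarrow> (('a \<times> 'l) \<times> ('a \<times> 'l)) \<Rightarrow>\<^sub>0 'k" where
  "P1 = linext (\<lambda>((a, x), (b, y)). fsc (1 / 2) (W a x b y + W a y b x))"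

(* p2 followed by the embedding into \<Lambda>^2(g):
   ax \<wedge> by \<mapsto> ab \<otimes> x\<wedge>y \<mapsto> 1/2 (abx \<wedge> 1y - aby \<wedge> 1x) *)
definition P2 :: "((('a::comm_ring_1 \<times> 'l) \<times> ('a \<times> 'l)) \<Rightarrow>\<^sub>0 'k::field)
    \<Rightarrow> (('a \<times> 'l) \<times> ('a \<times> 'l)) \<Rightarrow>\<^sub>0 'k" where
  "P2 = linext (\<lambda>((a, x), (b, y)). fsc (1 / 2) (W (a * b) x 1 y - W (a * b) y 1 x))"

end

theory Submission
  imports Defs
begin

text \<open>
  Let \<open>\<tau>\<close> swap the Lie algebra arguments, \<open>ax \<wedge> by \<mapsto> ay \<wedge> bx\<close>, and let \<open>\<mu>\<close> collect the
  coefficients in the first factor, \<open>ax \<wedge> by \<mapsto> abx \<wedge> 1y\<close>. Then \<open>p\<^sub>1 = (1 + \<tau>)/2\<close> and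
  \<open>p\<^sub>2 = \<mu>(1 - \<tau>)/2\<close>. Both \<open>\<tau>\<close> and \<open>\<mu>\<close> respect the multilinearity relations, \<open>\<tau>\<close> preserves
  antisymmetry and \<open>\<mu>(1 - \<tau>)\<close> kills it, so \<open>p\<^sub>1 + p\<^sub>2\<close> maps relations into \<open>B\<^sub>2\<close>. On a
  boundary \<open>\<partial>(ax \<wedge> by \<wedge> cz)\<close> the two congruences are explicit identities in the free space:
  each difference is a sum of boundaries of decomposable elements and antisymmetry relations.
  Adding them puts \<open>(p\<^sub>1 + p\<^sub>2)(\<partial>(ax \<wedge> by \<wedge> cz))\<close> into \<open>B\<^sub>2\<close>, and linearity does the rest.
\<close>

lemma lookup_fsc [simp]: "Poly_Mapping.lookup (fsc c f) k = c * Poly_Mapping.lookup f k"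
  unfolding fsc_def by (simp add: Poly_Mapping.map.rep_eq when_def)

interpretation fs: module fsc
  by unfold_locales (auto intro!: poly_mapping_eqI simp: lookup_add algebra_simps)

lemma linext_eq_sum_superset:
  assumes "finite S" "Poly_Mapping.keys f \<subseteq> S"
  shows "linext g f = (\<Sum>v\<in>S. fsc (Poly_Mapping.lookup f v) (g v))"
  unfolding linext_def
  by (rule sum.mono_neutral_left) (use assms in \<open>auto simp: in_keys_iff\<close>)

lemma linext_add: "linext g (p + q) = linext g p + linext g q"
proof -
  let ?S = "Poly_Mapping.keys p \<union> Poly_Mapping.keys q"
  have "linext g (p + q) = (\<Sum>v\<in>?S. fsc (Poly_Mapping.lookup (p + q) v) (g v))"
    by (rule linext_eq_sum_superset) (auto dest: subsetD[OF keys_add])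
  also have "\<dots> = linext g p + linext g q"
    by (simp add: lookup_add fs.scale_left_distrib sum.distrib linext_eq_sum_superset[symmetric])
  finally show ?thesis .
qed

lemma linext_fsc: "linext g (fsc c p) = fsc c (linext g p)"
proof -
  have "linext g (fsc c p)
      = (\<Sum>v\<in>Poly_Mapping.keys p. fsc (Poly_Mapping.lookup (fsc c p) v) (g v))"
    by (rule linext_eq_sum_superset) (auto simp: in_keys_iff)
  then show ?thesis
    by (simp add: linext_def fs.scale_sum_right)
qed

lemma module_hom_linext: "module_hom fsc fsc (linext g)"
  by unfold_locales (simp_all add: linext_add linext_fsc)

lemma linext_single [simp]: "linext g (Poly_Mapping.single v 1) = g v"
  by (simp add: linext_def)

lemma fsc_single: "fsc c (Poly_Mapping.single v 1) = Poly_Mapping.single v c"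
  by (rule poly_mapping_eqI) (simp add: lookup_single when_def)

lemma linext_single_id: "linext (\<lambda>v. Poly_Mapping.single v 1) p = p"
proof (rule poly_mapping_eqI)
  fix k
  have "Poly_Mapping.lookup (linext (\<lambda>v. Poly_Mapping.single v 1) p) k
      = (\<Sum>v\<in>Poly_Mapping.keys p. if k = v then Poly_Mapping.lookup p v else 0)"
    by (simp add: linext_def fsc_single lookup_sum lookup_single when_def)
  also have "\<dots> = Poly_Mapping.lookup p k"
    by (simp add: in_keys_iff)
  finally show "Poly_Mapping.lookup (linext (\<lambda>v. Poly_Mapping.single v 1) p) k
      = Poly_Mapping.lookup p k" .
qed

lemma linext_unique:
  assumes "module_hom fsc fsc f" and "\<And>a x b y. f (W a x b y) = g ((a, x), (b, y))"
  shows "linext g = f"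
proof
  interpret f: module_hom fsc fsc f by fact
  fix p
  have "linext g p = linext (\<lambda>v. f (Poly_Mapping.single v 1)) p"
    by (rule arg_cong2[where f = linext]) (auto simp: fun_eq_iff assms(2)[unfolded W_def])
  also have "\<dots> = f p"
    by (subst (2) linext_single_id[symmetric]) (simp add: linext_def f.sum f.scale)
  finally show "linext g p = f p" .
qed

definition swap_lie :: "((('a::comm_ring_1 \<times> 'l) \<times> ('a \<times> 'l)) \<Rightarrow>\<^sub>0 'k::field)
    \<Rightarrow> (('a \<times> 'l) \<times> ('a \<times> 'l)) \<Rightarrow>\<^sub>0 'k" where
  "swap_lie = linext (\<lambda>((a, x), (b, y)). W a y b x)"

definition mul_coeffs :: "((('a::comm_ring_1 \<times> 'l) \<times> ('a \<times> 'l)) \<Rightarrow>\<^sub>0 'k::field)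
    \<Rightarrow> (('a \<times> 'l) \<times> ('a \<times> 'l)) \<Rightarrow>\<^sub>0 'k" where
  "mul_coeffs = linext (\<lambda>((a, x), (b, y)). W (a * b) x 1 y)"

interpretation swap_lie: module_hom fsc fsc swap_lie
  unfolding swap_lie_def by (rule module_hom_linext)

interpretation mul_coeffs: module_hom fsc fsc mul_coeffs
  unfolding mul_coeffs_def by (rule module_hom_linext)

lemma swap_lie_W [simp]: "swap_lie (W a x b y) = W a y b x"
  by (simp add: swap_lie_def W_def)

lemma mul_coeffs_W [simp]: "mul_coeffs (W a x b y) = W (a * b) x 1 y"
  by (simp add: mul_coeffs_def W_def)

lemma P1_eq: "P1 w = fsc (1 / 2) (w + swap_lie w)"
proof -
  have "module_hom fsc fsc (\<lambda>w. fsc (1 / 2) (w + swap_lie w))"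
    by unfold_locales
      (simp_all add: swap_lie.add swap_lie.scale fs.scale_right_distrib fs.scale_left_commute)
  then have "linext (\<lambda>((a, x), (b, y)). fsc (1 / 2) (W a x b y + W a y b x))
      = (\<lambda>w. fsc (1 / 2) (w + swap_lie w))"
    by (rule linext_unique) simp
  then show ?thesis
    unfolding P1_def by (rule fun_cong)
qed

lemma P2_eq: "P2 w = fsc (1 / 2) (mul_coeffs (w - swap_lie w))"
proof -
  have "module_hom fsc fsc (\<lambda>w. fsc (1 / 2) (mul_coeffs (w - swap_lie w)))"
    by unfold_locales (simp_all add: swap_lie.add swap_lie.scale mul_coeffs.add mul_coeffs.scale
        mul_coeffs.diff fs.scale_right_diff_distrib fs.scale_right_distrib fs.scale_scale algebra_simps)
  then have "linext (\<lambda>((a, x), (b, y)). fsc (1 / 2) (W (a * b) x 1 y - W (a * b) y 1 x))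
      = (\<lambda>w. fsc (1 / 2) (mul_coeffs (w - swap_lie w)))"
    by (rule linext_unique) (simp add: mul_coeffs.diff)
  then show ?thesis
    unfolding P2_def by (rule fun_cong)
qed

lemma rel2_intros:
  "W (a + a') x b y - W a x b y - W a' x b y \<in> rel2 sA sL"
  "W a (x + x') b y - W a x b y - W a x' b y \<in> rel2 sA sL"
  "W a x (b + b') y - W a x b y - W a x b' y \<in> rel2 sA sL"
  "W a x b (y + y') - W a x b y - W a x b y' \<in> rel2 sA sL"
  "W (sA c a) x b y - fsc c (W a x b y) \<in> rel2 sA sL"
  "W a (sL c x) b y - fsc c (W a x b y) \<in> rel2 sA sL"
  "W a x (sA c b) y - fsc c (W a x b y) \<in> rel2 sA sL"
  "W a x b (sL c y) - fsc c (W a x b y) \<in> rel2 sA sL"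
  "W a x b y + W b y a x \<in> rel2 sA sL"
  unfolding rel2_def Un_iff by fast+

lemma rel2E [consumes 1, case_names add1 add2 add3 add4 scale1 scale2 scale3 scale4 antisym]:
  assumes "r \<in> rel2 sA sL"
  obtains (add1) a a' x b y where "r = W (a + a') x b y - W a x b y - W a' x b y"
    | (add2) a x x' b y where "r = W a (x + x') b y - W a x b y - W a x' b y"
    | (add3) a x b b' y where "r = W a x (b + b') y - W a x b y - W a x b' y"
    | (add4) a x b y y' where "r = W a x b (y + y') - W a x b y - W a x b y'"
    | (scale1) c a x b y where "r = W (sA c a) x b y - fsc c (W a x b y)"
    | (scale2) c a x b y where "r = W a (sL c x) b y - fsc c (W a x b y)"
    | (scale3) c a x b y where "r = W a x (sA c b) y - fsc c (W a x b y)"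
    | (scale4) c a x b y where "r = W a x b (sL c y) - fsc c (W a x b y)"
    | (antisym) a x b y where "r = W a x b y + W b y a x"
  using assms unfolding rel2_def Un_iff by fast

lemma swap_lie_rel2: "r \<in> rel2 sA sL \<Longrightarrow> swap_lie r \<in> rel2 sA sL"
  by (erule rel2E) (simp_all add: swap_lie.diff swap_lie.add swap_lie.scale rel2_intros)

lemma mul_coeffs_diff_swap_rel2:
  assumes "comm_algebra sA" and "r \<in> rel2 sA sL"
  shows "mul_coeffs (r - swap_lie r) \<in> fs.span (rel2 sA sL)"
proof -
  have sA_mult: "sA c a * b = sA c (a * b)" "a * sA c b = sA c (a * b)" for c a b
    using assms(1) unfolding comm_algebra_def by (metis mult.commute)+
  from assms(2) show ?thesis
    by (cases rule: rel2E)
      (simp_all add: swap_lie.diff swap_lie.add swap_lie.scale mul_coeffs.diff mul_coeffs.add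
        mul_coeffs.scale sA_mult distrib_left distrib_right mult.commute
        fs.span_diff fs.span_base fs.span_zero rel2_intros)
qed

lemma subspace_B2: "fs.subspace (B2 sA sL br)"
  unfolding B2_def by (rule fs.subspace_span)

lemma rel2_subset_B2: "rel2 sA sL \<subseteq> B2 sA sL br"
  unfolding B2_def by (auto intro: fs.span_base)

lemma W_antisym_in_B2: "W a x b y + W b y a x \<in> B2 sA sL br"
  using rel2_intros(9) rel2_subset_B2 by blast

lemma bd3_in_B2: "bd3 br a x b y c z \<in> B2 sA sL br"
  unfolding B2_def by (rule fs.span_base) blast

lemma P1_bd3_congruence:
  "P1 (bd3 br a x b y c z) - P1 (W (a * b * c) x 1 (br y z)) \<in> B2 sA sL br"
proof -
  let ?d = "bd3 br a x b y c z" and ?w = "W (a * b * c) x 1 (br y z)"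
  have "(?d + swap_lie ?d) - (?w + swap_lie ?w) =
      bd3 br a x b y c z + bd3 br b x c y a z - bd3 br 1 x c y (a * b) z - bd3 br (b * c) x 1 y a z
      - bd3 br b x (c * a) y 1 z + bd3 br (a * b * c) x 1 y 1 z
      + (W (a * b) z c (br x y) + W c (br x y) (a * b) z)
      + (W (b * c) x a (br y z) + W a (br y z) (b * c) x)
      + (W (c * a) y b (br z x) + W b (br z x) (c * a) y)
      - (W (a * b * c) x 1 (br y z) + W 1 (br y z) (a * b * c) x)"
    by (simp add: bd3_def swap_lie.add algebra_simps)
  also have "\<dots> \<in> B2 sA sL br"
    by (intro fs.subspace_add fs.subspace_diff subspace_B2 bd3_in_B2 W_antisym_in_B2)
  finally have "fsc (1 / 2) ((?d + swap_lie ?d) - (?w + swap_lie ?w)) \<in> B2 sA sL br"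
    by (rule fs.subspace_scale[OF subspace_B2])
  then show ?thesis
    by (simp add: P1_eq fs.scale_right_diff_distrib)
qed

lemma P1_P2_bd3_congruence:
  "P1 (W (a * b * c) x 1 (br y z)) + P2 (bd3 br a x b y c z) \<in> B2 sA sL br"
proof -
  let ?d = "bd3 br a x b y c z" and ?w = "W (a * b * c) x 1 (br y z)"
  have "(?w + swap_lie ?w) + mul_coeffs (?d - swap_lie ?d) =
      bd3 br 1 x (a * b * c) y 1 z + bd3 br 1 x 1 y (a * b * c) z
      - (W (a * b * c) z 1 (br x y) + W 1 (br x y) (a * b * c) z)
      - (W (a * b * c) y 1 (br z x) + W 1 (br z x) (a * b * c) y)"
    by (simp add: bd3_def swap_lie.add swap_lie.diff mul_coeffs.add mul_coeffs.diff algebra_simps)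
  also have "\<dots> \<in> B2 sA sL br"
    by (intro fs.subspace_add fs.subspace_diff subspace_B2 bd3_in_B2 W_antisym_in_B2)
  finally have "fsc (1 / 2) ((?w + swap_lie ?w) + mul_coeffs (?d - swap_lie ?d)) \<in> B2 sA sL br"
    by (rule fs.subspace_scale[OF subspace_B2])
  then show ?thesis
    by (simp add: P1_eq P2_eq fs.scale_right_distrib)
qed

lemma P1_plus_P2_in_B2:
  assumes "comm_algebra sA" and "w \<in> B2 sA sL br"
  shows "P1 w + P2 w \<in> B2 sA sL br"
proof -
  let ?G = "rel2 sA sL \<union> {bd3 br a x b y c z | a x b y c z. True}"
  interpret P: module_hom fsc fsc "\<lambda>w. P1 w + P2 w"
    by unfold_locales (simp_all add: P1_def P2_def linext_add linext_fsc fs.scale_right_distrib)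
  have "P1 g + P2 g \<in> B2 sA sL br" if "g \<in> ?G" for g
    using that
  proof
    assume "g \<in> rel2 sA sL"
    have "mul_coeffs (g - swap_lie g) \<in> B2 sA sL br"
      using mul_coeffs_diff_swap_rel2[OF assms(1) \<open>g \<in> rel2 sA sL\<close>]
        fs.span_minimal[OF rel2_subset_B2 subspace_B2] by blast
    moreover have "g \<in> B2 sA sL br" and "swap_lie g \<in> B2 sA sL br"
      using \<open>g \<in> rel2 sA sL\<close> swap_lie_rel2 rel2_subset_B2 by blast+
    ultimately have "fsc (1 / 2) (g + swap_lie g + mul_coeffs (g - swap_lie g)) \<in> B2 sA sL br"
      by (intro fs.subspace_scale fs.subspace_add subspace_B2)
    then show ?thesis
      by (simp add: P1_eq P2_eq fs.scale_right_distrib)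
  next
    assume "g \<in> {bd3 br a x b y c z | a x b y c z. True}"
    then obtain a x b y c z where g: "g = bd3 br a x b y c z" by blast
    have "(P1 g - P1 (W (a * b * c) x 1 (br y z))) + (P1 (W (a * b * c) x 1 (br y z)) + P2 g)
        \<in> B2 sA sL br"
      unfolding g by (intro fs.subspace_add subspace_B2 P1_bd3_congruence P1_P2_bd3_congruence)
    then show ?thesis
      by simp
  qed
  then have "fs.span ?G \<subseteq> (\<lambda>w. P1 w + P2 w) -` B2 sA sL br"
    by (intro fs.span_minimal P.subspace_vimage subspace_B2) blast
  with assms(2) show ?thesis
    by (auto simp: B2_def)
qed

theorem lemma2p2:
  fixes sA :: "'k::field \<Rightarrow> 'a::comm_ring_1 \<Rightarrow> 'a"
    and sL :: "'k \<Rightarrow> 'l::ab_group_add \<Rightarrow> 'l"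
    and br :: "'l \<Rightarrow> 'l \<Rightarrow> 'l"
  assumes "(2::'k) \<noteq> 0"
    and "comm_algebra sA"
    and "lie_algebra sL br"
  shows "(\<forall>(a::'a) (b::'a) (c::'a) (x::'l) (y::'l) (z::'l).
            P1 (bd3 br a x b y c z) - P1 (W (a * b * c) x 1 (br y z)) \<in> B2 sA sL br
          \<and> P1 (W (a * b * c) x 1 (br y z)) + P2 (bd3 br a x b y c z) \<in> B2 sA sL br)
       \<and> (\<forall>w\<in>B2 sA sL br. P1 w + P2 w \<in> B2 sA sL br)"
  \<comment> \<open>Neither \<open>2 \<noteq> 0\<close> nor the Lie algebra axioms are used: \<open>B2\<close> is presented by generators,
    with \<open>\<partial>\<close> given by its formula, and if \<open>2 = 0\<close> then the junk value \<open>1 / 2 = 0\<close> makes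
    \<open>P1\<close> and \<open>P2\<close> vanish.\<close>
  by (intro conjI allI ballI P1_bd3_congruence P1_P2_bd3_congruence P1_plus_P2_in_B2[OF assms(2)])

end
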